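(* Let $\mathcal D$ be a finite family of $\sigma$-structures. Then the family $\mathcal O_{\mathcal D}$ of $\sigma$-forests which do not admit a homomorphism to any structure in $\mathcal D$ is regular.
   Context: Fix a type $\sigma$ (finite set of relation symbols with arities); $\sigma$-structures are finite sets with an $r$-ary relation per symbol of arity $r$; homomorphisms are relation-preserving maps. $\mathrm{Inc}(\mathbf A)$ is the bipartite multigraph with parts $V(\mathbf A)$ and the blocks $(R,(x_1,\dots,x_r))$, $(x_1,\dots,x_r)\in R(\mathbf A)$, with one edge joining $x_i$ to the block for each $i$; $\mathbf A$ is a $\sigma$-forest if $\mathrm{Inc}(\mathbf A)$ has no cycles or parallel edges. $\mathbb F$ is the set of isomorphism classes of $\sigma$-forests, $\mathbb F_{\mathrm r}$ that of rooted $\sigma$-forests. $(\mathbf A,a)+(\mathbf B,b)$: disjoint union with $a,b$ identified as new root; $[(\mathbf A,a)]$ forgets the root. $\mathcal O\subseteq\mathbb F$ is regular if there are only finitely many distinct sets $\mathcal O-(\mathbf A,a)=\{(\mathbf B,b)\in\mathbb F_{\mathrm r}:[(\mathbf A,a)+(\mathbf B,b)]\in\mathcal O\}$, $(\mathbf A,a)\in\mathbb F_{\mathrm r}$. *)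

theory Defs
  imports Main
begin

text \<open>The type sigma: a finite type 'r of relation symbols together with an
arity function ar.\<close>

type_synonym ('r, 'v) struct = "'v set \<times> ('r \<Rightarrow> 'v list set)"

definition verts :: "('r, 'v) struct \<Rightarrow> 'v set" where
  "verts A = fst A"

definition rels :: "('r, 'v) struct \<Rightarrow> 'r \<Rightarrow> 'v list set" where
  "rels A = snd A"

definition wf_struct :: "('r \<Rightarrow> nat) \<Rightarrow> ('r, 'v) struct \<Rightarrow> bool" where
  "wf_struct ar A \<longleftrightarrow> finite (verts A) \<and>
     (\<forall>R. \<forall>t\<in>rels A R. length t = ar R \<and> set t \<subseteq> verts A)"

definition is_hom :: "('r, 'v) struct \<Rightarrow> ('r, 'w) struct \<Rightarrow> ('v \<Rightarrow> 'w) \<Rightarrow> bool" where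
  "is_hom A B h \<longleftrightarrow> h ` verts A \<subseteq> verts B \<and>
     (\<forall>R. \<forall>t\<in>rels A R. map h t \<in> rels B R)"

definition hom_exists :: "('r, 'v) struct \<Rightarrow> ('r, 'w) struct \<Rightarrow> bool" where
  "hom_exists A B \<longleftrightarrow> (\<exists>h. is_hom A B h)"

text \<open>Incidence multigraph Inc(A): nodes Inl x (vertices) and Inr (R,t) (blocks);
for each position i of a tuple t in R there is an edge between t!i and the block.
Adjacency of the underlying simple graph: \<close>
definition inc_adj :: "('r, 'v) struct \<Rightarrow> ('v + ('r \<times> 'v list)) \<Rightarrow> ('v + ('r \<times> 'v list)) \<Rightarrow> bool" where
  "inc_adj A x y \<longleftrightarrow> (\<exists>R t i. t \<in> rels A R \<and> i < length t \<and>
      ((x = Inl (t ! i) \<and> y = Inr (R, t)) \<or> (y = Inl (t ! i) \<and> x = Inr (R, t))))"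

definition inc_has_cycle :: "('r, 'v) struct \<Rightarrow> bool" where
  "inc_has_cycle A \<longleftrightarrow> (\<exists>cs. 3 \<le> length cs \<and> distinct cs \<and>
      (\<forall>i < length cs. inc_adj A (cs ! i) (cs ! ((i + 1) mod length cs))))"

text \<open>Parallel edges in Inc(A) occur exactly when some tuple has a repeated entry.
A sigma-forest: Inc(A) has no cycles and no parallel edges.\<close>
definition is_forest :: "('r \<Rightarrow> nat) \<Rightarrow> ('r, 'v) struct \<Rightarrow> bool" where
  "is_forest ar A \<longleftrightarrow> wf_struct ar A \<and> (\<forall>R. \<forall>t\<in>rels A R. distinct t) \<and> \<not> inc_has_cycle A"

definition rooted_forest :: "('r \<Rightarrow> nat) \<Rightarrow> ('r, 'v) struct \<Rightarrow> 'v \<Rightarrow> bool" where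
  "rooted_forest ar A a \<longleftrightarrow> is_forest ar A \<and> a \<in> verts A"

text \<open>Representatives of forests have vertex type nat. The sum (A,a)+(B,b):
disjoint union (A's vertices x \<mapsto> 2x, B's vertices y \<mapsto> 2y+1) with b identified
with a; the new root is 2a.\<close>
definition glue_map :: "nat \<Rightarrow> nat \<Rightarrow> nat \<Rightarrow> nat" where
  "glue_map a b y = (if y = b then 2 * a else 2 * y + 1)"

definition rsum :: "('r, nat) struct \<Rightarrow> nat \<Rightarrow> ('r, nat) struct \<Rightarrow> nat \<Rightarrow> ('r, nat) struct" where
  "rsum A a B b =
     ((\<lambda>x. 2 * x) ` verts A \<union> glue_map a b ` verts B,
      \<lambda>R. map (\<lambda>x. 2 * x) ` rels A R \<union> map (glue_map a b) ` rels B R)"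

definition rsum_root :: "nat \<Rightarrow> nat" where
  "rsum_root a = 2 * a"

text \<open>The residual O - (A,a) (on representatives; O is meant to be
isomorphism-invariant).\<close>
definition residual ::
  "('r \<Rightarrow> nat) \<Rightarrow> ('r, nat) struct set \<Rightarrow> ('r, nat) struct \<Rightarrow> nat \<Rightarrow> (('r, nat) struct \<times> nat) set" where
  "residual ar Ob A a = {(B, b). rooted_forest ar B b \<and> rsum A a B b \<in> Ob}"

definition regular :: "('r \<Rightarrow> nat) \<Rightarrow> ('r, nat) struct set \<Rightarrow> bool" where
  "regular ar Ob \<longleftrightarrow> finite {residual ar Ob A a | A a. rooted_forest ar A a}"

definition forbidden_family :: "('r \<Rightarrow> nat) \<Rightarrow> ('r, 'w) struct set \<Rightarrow> ('r, nat) struct set" where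
  "forbidden_family ar D = {F. is_forest ar F \<and> (\<forall>B\<in>D. \<not> hom_exists F B)}"

end

theory Submission
  imports Defs "HOL-Library.FuncSet"
begin

text \<open>A homomorphism from the sum (A,a)+(B,b) to C is a pair of homomorphisms A \<rightarrow> C and
B \<rightarrow> C agreeing on the roots. Hence the residual of a rooted forest (A,a) depends only on
its profile: for each C in D, the set of images of a under homomorphisms A \<rightarrow> C. As D is
finite and consists of finite structures, there are only finitely many profiles. That the
sum of two forests is again a forest holds because a cycle in its incidence graph meets the
glued root at most once, so it stays on one side of the sum and pulls back to A or to B.\<close>

definition inc_cycle :: "('r, 'v) struct \<Rightarrow> ('v + 'r \<times> 'v list) list \<Rightarrow> bool" where
  "inc_cycle G cs \<longleftrightarrow> 3 \<le> length cs \<and> distinct cs \<and>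
     (\<forall>i < length cs. inc_adj G (cs ! i) (cs ! (Suc i mod length cs)))"

lemma inc_has_cycle_iff: "inc_has_cycle G \<longleftrightarrow> (\<exists>cs. inc_cycle G cs)"
  by (simp add: inc_has_cycle_def inc_cycle_def)

lemma inc_adj_Inl_Inr [simp]: "inc_adj G (Inl v) (Inr (R, t)) \<longleftrightarrow> t \<in> rels G R \<and> v \<in> set t"
  and inc_adj_Inr_Inl [simp]: "inc_adj G (Inr (R, t)) (Inl v) \<longleftrightarrow> t \<in> rels G R \<and> v \<in> set t"
  by (auto simp: inc_adj_def in_set_conv_nth)

lemma inc_adj_Inl_Inl [simp]: "\<not> inc_adj G (Inl v) (Inl w)"
  and inc_adj_Inr_Inr [simp]: "\<not> inc_adj G (Inr p) (Inr q)"
  by (auto simp: inc_adj_def)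

lemma Suc_mod_pred: "i < n \<Longrightarrow> Suc ((i + n - 1) mod n) mod n = i"
  by (cases i) (auto simp: mod_Suc_eq)

lemma Suc_Suc_mod_neq: "3 \<le> n \<Longrightarrow> Suc (Suc i mod n) mod n \<noteq> i mod n"
proof
  assume n: "3 \<le> n" and "Suc (Suc i mod n) mod n = i mod n"
  then have "(i + 2) mod n = i mod n" by (simp add: mod_Suc_eq)
  then have "n dvd 2" by (simp add: mod_eq_dvd_iff_nat)
  with n show False by (auto dest: dvd_imp_le)
qed

lemma inc_cycle_neighbours:
  assumes "inc_cycle G cs" "x \<in> set cs"
  obtains y z where "inc_adj G y x" "inc_adj G x z" "y \<noteq> z"
proof -
  let ?n = "length cs"
  obtain i where i: "i < ?n" "cs ! i = x" using assms(2) by (meson in_set_conv_nth)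
  have n: "3 \<le> ?n" "distinct cs" and adj: "\<And>i. i < ?n \<Longrightarrow> inc_adj G (cs ! i) (cs ! (Suc i mod ?n))"
    using assms(1) by (auto simp: inc_cycle_def)
  define k where "k = (i + ?n - 1) mod ?n"
  have k: "k < ?n" "Suc k mod ?n = i"
    using Suc_mod_pred[OF i(1)] i(1) unfolding k_def by (auto intro: mod_less_divisor)
  have i': "Suc i mod ?n < ?n" using i(1) by (auto intro: mod_less_divisor)
  have "k \<noteq> Suc i mod ?n"
    using Suc_Suc_mod_neq[OF n(1), of i] i k by auto
  then have "cs ! k \<noteq> cs ! (Suc i mod ?n)"
    using nth_eq_iff_index_eq[OF n(2) k(1) i'] by simp
  moreover have "inc_adj G (cs ! k) x" using adj[OF k(1)] k i by simp
  moreover have "inc_adj G x (cs ! (Suc i mod ?n))" using adj[OF i(1)] i by simp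
  ultimately show thesis using that by blast
qed

definition nonconstant :: "'a list \<Rightarrow> bool" where
  "nonconstant t \<longleftrightarrow> (\<exists>p\<in>set t. \<exists>q\<in>set t. p \<noteq> q)"

lemma nonconstant_map: "nonconstant (map f s) \<Longrightarrow> nonconstant s"
  unfolding nonconstant_def by auto metis

lemma inc_cycle_block:
  assumes "inc_cycle G cs" "Inr (R, t) \<in> set cs"
  shows "t \<in> rels G R" "nonconstant t"
proof -
  obtain y z where "inc_adj G y (Inr (R, t))" "inc_adj G (Inr (R, t)) z" "y \<noteq> z"
    using inc_cycle_neighbours[OF assms] .
  then show "t \<in> rels G R" "nonconstant t"
    by (cases y; cases z; auto simp: nonconstant_def)+
qed

fun emb_node :: "('v \<Rightarrow> 'u) \<Rightarrow> 'v + 'r \<times> 'v list \<Rightarrow> 'u + 'r \<times> 'u list" where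
  "emb_node f (Inl x) = Inl (f x)"
| "emb_node f (Inr (R, s)) = Inr (R, map f s)"

lemma inj_emb_node: "inj f \<Longrightarrow> inj (emb_node f)"
  by (rule injI) (auto elim!: emb_node.elims simp: inj_eq)

text \<open>Only nonconstant tuples need to be reflected, since a block on a cycle has two
distinct neighbours.\<close>

lemma inc_cycle_pullback:
  assumes cyc: "inc_cycle G cs" and f: "inj f" and rng: "set cs \<subseteq> range (emb_node f)"
    and reflect: "\<And>R s. map f s \<in> rels G R \<Longrightarrow> nonconstant s \<Longrightarrow> s \<in> rels X R"
  shows "inc_has_cycle X"
proof -
  obtain cs' where cs: "cs = map (emb_node f) cs'"
    using rng ex_map_conv[of cs "emb_node f"] by blast
  have block: "s \<in> rels X R" if "Inr (R, s) \<in> set cs'" for R s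
  proof -
    have "Inr (R, map f s) \<in> set cs" using that unfolding cs by force
    then show ?thesis using inc_cycle_block[OF cyc] reflect nonconstant_map by blast
  qed
  have adj: "inc_adj X u v"
    if "inc_adj G (emb_node f u) (emb_node f v)" "u \<in> set cs'" "v \<in> set cs'" for u v
    using that f block by (cases u; cases v) (auto simp: inj_image_mem_iff)
  have "inc_cycle X cs'"
    unfolding inc_cycle_def
  proof (intro conjI allI impI)
    show "3 \<le> length cs'" "distinct cs'"
      using cyc inj_emb_node[OF f] by (auto simp: inc_cycle_def cs distinct_map)
  next
    fix i assume i: "i < length cs'"
    then have "Suc i mod length cs' < length cs'" by (auto intro: mod_less_divisor)
    then show "inc_adj X (cs' ! i) (cs' ! (Suc i mod length cs'))"
      using cyc i by (auto simp: inc_cycle_def cs intro!: adj)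
  qed
  then show ?thesis by (auto simp: inc_has_cycle_iff)
qed

text \<open>The excluded index j may be \<open>\<ge> n\<close>; then f is constant on all indices below n.\<close>

lemma mod_chain_const:
  fixes f :: "nat \<Rightarrow> 'a"
  assumes step: "\<And>i. i < n \<Longrightarrow> i \<noteq> j \<Longrightarrow> Suc i mod n \<noteq> j \<Longrightarrow> f (Suc i mod n) = f i"
    and i: "i < n" "i \<noteq> j" and k: "k < n" "k \<noteq> j"
  shows "f i = f k"
proof -
  define s where "s = Suc j mod n"
  have n: "0 < n" using i by simp
  have along: "f ((s + m) mod n) = f s" if "m < n" "(s + m) mod n \<noteq> j" for m
    using that
  proof (induction m)
    case 0
    then show ?case by (simp add: s_def)
  next
    case (Suc m)
    have "(s + m) mod n \<noteq> j"
    proof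
      assume eq: "(s + m) mod n = j"
      then have "j < n" using n by (metis mod_less_divisor)
      with eq have "(Suc j + m) mod n = j mod n" by (simp add: s_def mod_add_left_eq)
      then have "n dvd Suc m" by (simp add: mod_eq_dvd_iff_nat)
      with Suc.prems(1) show False by (auto dest: dvd_imp_le)
    qed
    moreover have "Suc ((s + m) mod n) mod n = (s + Suc m) mod n" by (simp add: mod_Suc_eq)
    ultimately show ?case using Suc step[of "(s + m) mod n"] n by simp
  qed
  have reach: "\<exists>m<n. (s + m) mod n = i'" if "i' < n" for i'
  proof -
    have "s < n" using n by (simp add: s_def)
    then have "(s + (i' + n - s)) mod n = i'" using that by simp
    then show ?thesis using n by (metis mod_add_right_eq mod_less_divisor)
  qed
  obtain mi mk where "mi < n" "(s + mi) mod n = i" "mk < n" "(s + mk) mod n = k"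
    using reach i(1) k(1) by blast
  then show ?thesis using along i k by metis
qed

lemma inc_cycle_const_off_node:
  assumes cyc: "inc_cycle G cs"
    and step: "\<And>x y. inc_adj G x y \<Longrightarrow> x \<noteq> z \<Longrightarrow> y \<noteq> z \<Longrightarrow> c x = c y"
    and "x \<in> set cs" "x \<noteq> z" "y \<in> set cs" "y \<noteq> z"
  shows "c x = c y"
proof -
  let ?n = "length cs"
  obtain j where j: "\<And>i. i < ?n \<Longrightarrow> cs ! i = z \<longleftrightarrow> i = j"
  proof (cases "z \<in> set cs")
    case True
    then obtain j where "j < ?n" "cs ! j = z" by (meson in_set_conv_nth)
    then show thesis using that cyc by (metis inc_cycle_def nth_eq_iff_index_eq)
  next
    case False
    then show thesis using that[of ?n] by (metis nth_mem less_irrefl)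
  qed
  obtain i k where "i < ?n" "cs ! i = x" "k < ?n" "cs ! k = y"
    using assms(3,5) by (meson in_set_conv_nth)
  moreover have "c (cs ! (Suc i mod ?n)) = c (cs ! i)"
    if "i < ?n" "i \<noteq> j" "Suc i mod ?n \<noteq> j" for i
  proof -
    have "Suc i mod ?n < ?n" using that(1) by (auto intro: mod_less_divisor)
    then show ?thesis using that cyc j step unfolding inc_cycle_def by metis
  qed
  ultimately show ?thesis
    using mod_chain_const[of ?n j "\<lambda>i. c (cs ! i)"] j assms(4,6) by metis
qed

lemma verts_rsum: "verts (rsum A a B b) = (\<lambda>x. 2 * x) ` verts A \<union> glue_map a b ` verts B"
  by (simp add: rsum_def verts_def)

lemma rels_rsum:
  "rels (rsum A a B b) R = map (\<lambda>x. 2 * x) ` rels A R \<union> map (glue_map a b) ` rels B R"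
  by (simp add: rsum_def rels_def)

lemma inj_double: "inj (\<lambda>x::nat. 2 * x)"
  by (simp add: inj_def)

lemma inj_glue_map: "inj (glue_map a b)"
  by (rule injI) (auto simp: glue_map_def split: if_splits; presburger)

lemma double_eq_glue_map_iff: "2 * x = glue_map a b y \<longleftrightarrow> x = a \<and> y = b"
  by (auto simp: glue_map_def) presburger

lemma map_double_eq_map_glue:
  assumes "map (\<lambda>x. 2 * x) s = map (glue_map a b) s'"
  shows "set s \<subseteq> {a} \<and> set s' \<subseteq> {b}"
proof -
  have img: "(\<lambda>x. 2 * x) ` set s = glue_map a b ` set s'"
    using arg_cong[OF assms, of set] by simp
  have "x = a" if "x \<in> set s" for x
    using that img double_eq_glue_map_iff by (metis (no_types, lifting) image_eqI imageE)
  moreover have "y = b" if "y \<in> set s'" for y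
    using that img double_eq_glue_map_iff by (metis (no_types, lifting) image_eqI imageE)
  ultimately show ?thesis by blast
qed

lemma nonconstant_not_subset_singleton: "nonconstant s \<Longrightarrow> \<not> set s \<subseteq> {c}"
  by (auto simp: nonconstant_def)

lemma rsum_tuple_left:
  assumes t: "map (\<lambda>x. 2 * x) s \<in> rels (rsum A a B b) R" and "nonconstant s"
  shows "s \<in> rels A R"
proof -
  have "map (\<lambda>x. 2 * x) s \<notin> map (glue_map a b) ` rels B R"
    using map_double_eq_map_glue nonconstant_not_subset_singleton[OF \<open>nonconstant s\<close>] by blast
  then show ?thesis using t by (auto simp: rels_rsum inj_map_eq_map[OF inj_double])
qed

lemma rsum_tuple_right:
  assumes t: "map (glue_map a b) s \<in> rels (rsum A a B b) R" and "nonconstant s"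
  shows "s \<in> rels B R"
proof -
  have "map (glue_map a b) s \<notin> map (\<lambda>x. 2 * x) ` rels A R"
    using map_double_eq_map_glue[OF sym] nonconstant_not_subset_singleton[OF \<open>nonconstant s\<close>]
    by blast
  then show ?thesis using t by (auto simp: rels_rsum inj_map_eq_map[OF inj_glue_map])
qed

text \<open>In the sum, A's vertices are relabelled to even and B's to odd numbers, except
that B's root becomes A's root 2a; away from 2a, odd_node tells the two sides apart.\<close>

fun odd_node :: "nat + 'r \<times> nat list \<Rightarrow> bool" where
  "odd_node (Inl v) = odd v"
| "odd_node (Inr (R, t)) = (\<exists>v\<in>set t. odd v)"

lemma odd_glue_map: "v \<in> glue_map a b ` S \<Longrightarrow> v \<noteq> 2 * a \<Longrightarrow> odd v"
  by (auto simp: glue_map_def)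

lemma rsum_adj_odd_node:
  assumes "inc_adj (rsum A a B b) x y" "x \<noteq> Inl (2 * a)" "y \<noteq> Inl (2 * a)"
  shows "odd_node x = odd_node y"
proof -
  have side: "odd v = (\<exists>w\<in>set t. odd w)"
    if "t \<in> rels (rsum A a B b) R" "v \<in> set t" "v \<noteq> 2 * a" for v t R
    using that odd_glue_map[of _ a b] by (fastforce simp: rels_rsum)
  show ?thesis
    using assms by (cases x rule: odd_node.cases; cases y rule: odd_node.cases) (auto dest: side)
qed

lemma even_node_in_range: "\<not> odd_node x \<Longrightarrow> x \<in> range (emb_node (\<lambda>v::nat. 2 * v))"
proof (induction x rule: odd_node.induct)
  case (1 v)
  then have "Inl v = emb_node (\<lambda>v. 2 * v) (Inl (v div 2))" by simp
  then show ?case by blast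
next
  case (2 R t)
  then have "Inr (R, t) = emb_node (\<lambda>v. 2 * v) (Inr (R, map (\<lambda>v. v div 2) t))"
    by (simp add: map_idI)
  then show ?case by blast
qed

lemma rsum_odd_node_in_range:
  assumes "inc_adj (rsum A a B b) x y" "odd_node x \<or> x = Inl (2 * a)"
  shows "x \<in> range (emb_node (glue_map a b))"
proof -
  have glue: "t \<in> map (glue_map a b) ` rels B R"
    if "t \<in> rels (rsum A a B b) R" "odd v" "v \<in> set t" for t R v
    using that by (auto simp: rels_rsum)
  show ?thesis
  proof (cases x)
    case (Inl v)
    show ?thesis
    proof (cases "v = 2 * a")
      case True
      then have "x = emb_node (glue_map a b) (Inl b)" using Inl by (simp add: glue_map_def)
      then show ?thesis by blast
    next
      case False
      then obtain R t where "t \<in> rels (rsum A a B b) R" "v \<in> set t" "odd v"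
        using assms Inl by (cases y) auto
      then obtain w where "v = glue_map a b w" using glue by fastforce
      then have "x = emb_node (glue_map a b) (Inl w)" using Inl by simp
      then show ?thesis by blast
    qed
  next
    case (Inr p)
    then obtain R t where x: "x = Inr (R, t)" by (cases p) auto
    then obtain v where "t \<in> rels (rsum A a B b) R" "v \<in> set t" "odd v"
      using assms by (cases y) auto
    then obtain s where "t = map (glue_map a b) s" using glue by blast
    then have "x = emb_node (glue_map a b) (Inr (R, s))" using x by simp
    then show ?thesis by blast
  qed
qed

lemma rsum_no_inc_cycle:
  assumes "\<not> inc_has_cycle A" "\<not> inc_has_cycle B"
  shows "\<not> inc_has_cycle (rsum A a B b)"
proof
  assume "inc_has_cycle (rsum A a B b)"
  then obtain cs where cyc: "inc_cycle (rsum A a B b) cs" by (auto simp: inc_has_cycle_iff)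
  let ?z = "Inl (2 * a) :: nat + 'a \<times> nat list"
  have same_side: "odd_node x = odd_node y"
    if "x \<in> set cs" "x \<noteq> ?z" "y \<in> set cs" "y \<noteq> ?z" for x y
    using inc_cycle_const_off_node[OF cyc rsum_adj_odd_node that] .
  have incident: "\<exists>y. inc_adj (rsum A a B b) x y" if "x \<in> set cs" for x
    by (rule inc_cycle_neighbours[OF cyc that]) blast
  show False
  proof (cases "\<exists>x\<in>set cs. x \<noteq> ?z \<and> odd_node x")
    case True
    then have "odd_node x \<or> x = ?z" if "x \<in> set cs" for x
      using same_side that by blast
    then have "set cs \<subseteq> range (emb_node (glue_map a b))"
      using incident rsum_odd_node_in_range by blast
    then have "inc_has_cycle B"
      by (rule inc_cycle_pullback[OF cyc inj_glue_map _ rsum_tuple_right])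
    with assms(2) show False ..
  next
    case False
    then have "\<not> odd_node x" if "x \<in> set cs" for x
      using that by auto
    then have "set cs \<subseteq> range (emb_node (\<lambda>v. 2 * v))"
      using even_node_in_range by blast
    then have "inc_has_cycle A"
      by (rule inc_cycle_pullback[OF cyc inj_double _ rsum_tuple_left])
    with assms(1) show False ..
  qed
qed

lemma rsum_forest:
  assumes A: "is_forest ar A" and B: "is_forest ar B"
  shows "is_forest ar (rsum A a B b)"
proof -
  have "wf_struct ar (rsum A a B b)"
    using A B unfolding is_forest_def wf_struct_def verts_rsum rels_rsum by fastforce
  moreover have "\<forall>R. \<forall>t\<in>rels (rsum A a B b) R. distinct t"
    using A B inj_double inj_glue_map
    by (auto simp: is_forest_def rels_rsum distinct_map inj_on_subset[OF _ subset_UNIV])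
  moreover have "\<not> inc_has_cycle (rsum A a B b)"
    using A B by (intro rsum_no_inc_cycle) (auto simp: is_forest_def)
  ultimately show ?thesis by (simp add: is_forest_def)
qed

lemma is_hom_rsum_iff:
  "is_hom (rsum A a B b) C h \<longleftrightarrow>
     is_hom A C (h \<circ> (\<lambda>x. 2 * x)) \<and> is_hom B C (h \<circ> glue_map a b)"
  by (simp add: is_hom_def verts_rsum rels_rsum image_Un image_comp ball_Un Ball_image_comp
      comp_def all_conj_distrib conj_ac)

lemma hom_exists_rsum_iff:
  "hom_exists (rsum A a B b) C \<longleftrightarrow> (\<exists>hA hB. is_hom A C hA \<and> is_hom B C hB \<and> hA a = hB b)"
proof
  assume "hom_exists (rsum A a B b) C"
  then obtain h where "is_hom (rsum A a B b) C h" by (auto simp: hom_exists_def)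
  moreover have "(h \<circ> (\<lambda>x. 2 * x)) a = (h \<circ> glue_map a b) b" by (simp add: glue_map_def)
  ultimately show "\<exists>hA hB. is_hom A C hA \<and> is_hom B C hB \<and> hA a = hB b"
    unfolding is_hom_rsum_iff by blast
next
  assume "\<exists>hA hB. is_hom A C hA \<and> is_hom B C hB \<and> hA a = hB b"
  then obtain hA hB where hom: "is_hom A C hA" "is_hom B C hB" and root: "hA a = hB b" by blast
  define h where "h x = (if even x then hA (x div 2) else hB (x div 2))" for x
  have "h \<circ> (\<lambda>x. 2 * x) = hA" "h \<circ> glue_map a b = hB"
    using root by (auto simp: h_def glue_map_def)
  then have "is_hom (rsum A a B b) C h" using hom by (simp add: is_hom_rsum_iff)
  then show "hom_exists (rsum A a B b) C" by (auto simp: hom_exists_def)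
qed

definition root_images :: "('r, 'v) struct \<Rightarrow> 'v \<Rightarrow> ('r, 'w) struct \<Rightarrow> 'w set" where
  "root_images A a C = {h a | h. is_hom A C h}"

lemma root_images_subset: "a \<in> verts A \<Longrightarrow> root_images A a C \<subseteq> verts C"
  by (auto simp: root_images_def is_hom_def)

lemma hom_exists_rsum_iff_root_images:
  "hom_exists (rsum A a B b) C \<longleftrightarrow> (\<exists>h. is_hom B C h \<and> h b \<in> root_images A a C)"
proof
  assume "hom_exists (rsum A a B b) C"
  then obtain hA hB where "is_hom A C hA" "is_hom B C hB" "hA a = hB b"
    by (auto simp: hom_exists_rsum_iff)
  then show "\<exists>h. is_hom B C h \<and> h b \<in> root_images A a C"
    unfolding root_images_def by (intro exI[of _ hB] conjI CollectI exI[of _ hA]) simp_all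
next
  assume "\<exists>h. is_hom B C h \<and> h b \<in> root_images A a C"
  then obtain hA hB where "is_hom A C hA" "is_hom B C hB" "hA a = hB b"
    by (auto simp: root_images_def)
  then show "hom_exists (rsum A a B b) C"
    unfolding hom_exists_rsum_iff by (intro exI[of _ hA] exI[of _ hB]) simp
qed

definition root_avoiders ::
  "('r \<Rightarrow> nat) \<Rightarrow> ('r, 'w) struct set \<Rightarrow> (('r, 'w) struct \<Rightarrow> 'w set) \<Rightarrow> (('r, nat) struct \<times> nat) set"
  where "root_avoiders ar D P =
    {(B, b). rooted_forest ar B b \<and> (\<forall>C\<in>D. \<forall>h. is_hom B C h \<longrightarrow> h b \<notin> P C)}"

lemma root_avoiders_restrict: "root_avoiders ar D (restrict P D) = root_avoiders ar D P"
  by (simp add: root_avoiders_def)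

lemma residual_forbidden_family:
  assumes "rooted_forest ar A a"
  shows "residual ar (forbidden_family ar D) A a = root_avoiders ar D (root_images A a)"
proof -
  have "rsum A a B b \<in> forbidden_family ar D \<longleftrightarrow>
      (\<forall>C\<in>D. \<forall>h. is_hom B C h \<longrightarrow> h b \<notin> root_images A a C)"
    if "rooted_forest ar B b" for B b
  proof -
    have "is_forest ar (rsum A a B b)"
      using assms that by (intro rsum_forest) (simp_all add: rooted_forest_def)
    then show ?thesis by (simp add: forbidden_family_def hom_exists_rsum_iff_root_images)
  qed
  then show ?thesis unfolding residual_def root_avoiders_def by auto
qed

theorem corollary3p4:
  fixes ar :: "'r::finite \<Rightarrow> nat" and D :: "('r, 'w) struct set"
  assumes "finite D" and "\<forall>B\<in>D. wf_struct ar B"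
  shows "regular ar (forbidden_family ar D)"
proof -
  let ?profiles = "\<Pi>\<^sub>E C\<in>D. Pow (verts C)"
  have "{residual ar (forbidden_family ar D) A a | A a. rooted_forest ar A a}
      \<subseteq> root_avoiders ar D ` ?profiles"
  proof (rule subsetI)
    fix X assume "X \<in> {residual ar (forbidden_family ar D) A a | A a. rooted_forest ar A a}"
    then obtain A a where X: "X = residual ar (forbidden_family ar D) A a"
      and Aa: "rooted_forest ar A a" by blast
    have "X = root_avoiders ar D (restrict (root_images A a) D)"
      using Aa by (simp add: X residual_forbidden_family root_avoiders_restrict)
    moreover have "restrict (root_images A a) D \<in> ?profiles"
      using Aa by (simp add: rooted_forest_def Pi_iff root_images_subset)
    ultimately show "X \<in> root_avoiders ar D ` ?profiles" by blast
  qed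
  moreover have "finite ?profiles"
    using assms by (intro finite_PiE) (auto simp: wf_struct_def)
  ultimately show ?thesis
    unfolding regular_def by (rule finite_subset[OF _ finite_imageI])
qed

end
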